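(* Let $k\ge 2$ and let $x_1, x_2, \ldots, x_{c}$ be the Nyldon factorization of $\mathit{TM}_{2k-1}$ (so $c$ is its number of factors). Then the Nyldon factorization of $\mathit{TM}_{2k}$ is $$x_1,\ \ldots,\ x_{c-1},\ x_{c}\cdot\overline{\mathit{TM}_{2k-2}}',\ b\cdot \mathit{TM}_{2k-2},$$ and the Nyldon factorization of $\mathit{TM}_{2k+1}$ is $$x_1,\ \ldots,\ x_{c-1},\ x_{c}\cdot\overline{\mathit{TM}_{2k-2}}',\ b\cdot \mathit{TM}_{2k-2}\cdot\overline{\mathit{TM}_{2k}}.$$ (For instance, the Nyldon factorization of $\mathit{TM}_3$ is $a,b,ba,baab$.)
   Context: Strings are over the binary alphabet $\{a,b\}$ ordered by $a \prec b$, and $\prec$ also denotes the induced lexicographic order on strings: $x \prec y$ iff $x$ is a proper prefix of $y$, or there is $i$ with $x[1..i-1]=y[1..i-1]$ and $x[i]\prec y[i]$; $x\preceq y$ means $x\prec y$ or $x=y$. Nyldon words are defined recursively: every string of length $1$ is a Nyldon word; a string $w$ with $|w|\ge 2$ is a Nyldon word iff there is no factorization $w=\gamma_1\cdots\gamma_m$ with $m\ge 2$, each $\gamma_i$ a nonempty Nyldon word, and $\gamma_1\preceq\gamma_2\preceq\cdots\preceq\gamma_m$. Every nonempty string $w$ has a unique factorization $w=\gamma_1\cdots\gamma_m$ into Nyldon words with $\gamma_i\preceq\gamma_{i+1}$ for all $i$; it is called the Nyldon factorization of $w$. For a binary string $w$, $\overline{w}$ is obtained by exchanging $a$ and $b$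 letterwise, and $w'=w[1..|w|-1]$ is $w$ with its last letter removed; $\overline{w}'$ means $(\overline{w})'$. Thue–Morse words: $\mathit{TM}_0=a$ and $\mathit{TM}_k=\mathit{TM}_{k-1}\cdot\overline{\mathit{TM}_{k-1}}$ for $k\ge1$. *)

theory Defs
  imports Main
begin

datatype letter = a | b

fun flip :: "letter \<Rightarrow> letter" where
  "flip a = b" | "flip b = a"

definition compl :: "letter list \<Rightarrow> letter list" where
  "compl w = map flip w"

definition lex_less :: "letter list \<Rightarrow> letter list \<Rightarrow> bool" where
  "lex_less x y \<longleftrightarrow>
     (\<exists>u. u \<noteq> [] \<and> y = x @ u) \<or>
     (\<exists>p s t. x = p @ [a] @ s \<and> y = p @ [b] @ t)"

definition lex_le :: "letter list \<Rightarrow> letter list \<Rightarrow> bool" where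
  "lex_le x y \<longleftrightarrow> lex_less x y \<or> x = y"

text \<open>Nyldon words of length at most n, defined by recursion on n
  (all factors of a factorization with at least 2 nonempty factors are shorter).\<close>
fun nyl_upto :: "nat \<Rightarrow> letter list set" where
  "nyl_upto 0 = {}"
| "nyl_upto (Suc n) = nyl_upto n \<union>
     {w. length w = Suc n \<and>
         (length w = 1 \<or>
          \<not> (\<exists>fs. length fs \<ge> 2 \<and> concat fs = w \<and>
                  (\<forall>g\<in>set fs. g \<noteq> [] \<and> g \<in> nyl_upto n) \<and>
                  successively lex_le fs))}"

definition nyldon :: "letter list \<Rightarrow> bool" where
  "nyldon w \<longleftrightarrow> w \<in> nyl_upto (length w)"

definition is_nyldon_fact :: "letter list \<Rightarrow> letter list list \<Rightarrow> bool" where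
  "is_nyldon_fact w fs \<longleftrightarrow>
     concat fs = w \<and> (\<forall>g\<in>set fs. g \<noteq> [] \<and> nyldon g) \<and> successively lex_le fs"

fun TM :: "nat \<Rightarrow> letter list" where
  "TM 0 = [a]"
| "TM (Suc n) = TM n @ compl (TM n)"

end

theory Submission
  imports Defs
begin

text \<open>In a nondecreasing factorization of a word into Nyldon words, every Nyldon suffix of
  the word is a suffix of the last factor; this rests on the fact that a proper Nyldon suffix
  of a Nyldon word is lexicographically smaller than the word, and it yields uniqueness of the
  factorization.  Nyldon words are then built by the criterion: if \<open>u > v\<close> are Nyldon and
  the right factor of the standard factorization of \<open>u\<close> is at most \<open>v\<close>, then \<open>uv\<close> is
  Nyldon with right factor \<open>v\<close>.

  Let \<open>t = TM(2i)\<close>, let \<open>c\<close> be its complement and \<open>c = c' b\<close>.  Then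
  \<open>TM(2i+2) = t c c' \<cdot> b t\<close> and \<open>TM(2i+3) = t c c' \<cdot> b t c t t c\<close>, where \<open>t c c'\<close> factors
  as \<open>a, b, ba, F(1), ..., F(i)\<close> with \<open>F(j+1) = b t c t t c c t t c'\<close> for \<open>j \<ge> 1\<close> (with \<open>t, c, c'\<close>
  taken at \<open>j\<close>).  That these are nondecreasing Nyldon factorizations follows by induction on \<open>i\<close>,
  applying the criterion to a family of words of the shape \<open>b t ...\<close> over \<open>t, c, c'\<close>.
  Uniqueness then identifies the given factorization of \<open>TM(2k-1)\<close> with this one.\<close>

section \<open>Lexicographic order\<close>

lemma lex_less_iff_lexord: "lex_less x y \<longleftrightarrow> (x, y) \<in> lexord {(a, b)}"
  unfolding lex_less_def lexord_def by (auto simp: neq_Nil_conv)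

lemma lex_less_Nil_left [simp]: "lex_less [] y \<longleftrightarrow> y \<noteq> []"
  by (simp add: lex_less_iff_lexord neq_Nil_conv)

lemma lex_less_Cons_Cons [simp]:
  "lex_less (x # xs) (y # ys) \<longleftrightarrow> x = a \<and> y = b \<or> x = y \<and> lex_less xs ys"
  by (simp add: lex_less_iff_lexord)

lemma lex_less_same_append [simp]: "lex_less (p @ x) (p @ y) \<longleftrightarrow> lex_less x y"
  by (simp add: lex_less_iff_lexord lexord_same_pref_iff)

lemma lex_less_self_append [simp]: "lex_less x (x @ y) \<longleftrightarrow> y \<noteq> []"
  using lex_less_same_append[of x "[]" y] by simp

lemma lex_less_irrefl [simp]: "\<not> lex_less x x"
  by (simp add: lex_less_iff_lexord lexord_irreflexive)

lemma lex_less_trans: "lex_less x y \<Longrightarrow> lex_less y z \<Longrightarrow> lex_less x z"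
  unfolding lex_less_iff_lexord by (rule lexord_trans) (auto simp: trans_def)

lemma lex_less_linear: "x \<noteq> y \<Longrightarrow> lex_less x y \<or> lex_less y x"
  unfolding lex_less_iff_lexord using lexord_linear[of "{(a, b)}" x y] letter.exhaust by blast

lemma lex_less_imp_le: "lex_less x y \<Longrightarrow> lex_le x y"
  unfolding lex_le_def by simp

lemma lex_le_trans: "lex_le x y \<Longrightarrow> lex_le y z \<Longrightarrow> lex_le x z"
  unfolding lex_le_def using lex_less_trans by blast

lemma lex_le_less_trans: "lex_le x y \<Longrightarrow> lex_less y z \<Longrightarrow> lex_less x z"
  unfolding lex_le_def using lex_less_trans by blast

lemma lex_less_le_trans: "lex_less x y \<Longrightarrow> lex_le y z \<Longrightarrow> lex_less x z"
  unfolding lex_le_def using lex_less_trans by blast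

lemma not_lex_le_if_less: "lex_less y x \<Longrightarrow> \<not> lex_le x y"
  unfolding lex_le_def using lex_less_trans by fastforce

lemma lex_le_self_append: "lex_le x (x @ y)"
  unfolding lex_le_def by auto

section \<open>Nyldon factorizations\<close>

lemma nyl_upto_nonempty_le: "w \<in> nyl_upto n \<Longrightarrow> w \<noteq> [] \<and> length w \<le> n"
  by (induction n) auto

lemma nyl_upto_iff: "w \<in> nyl_upto n \<longleftrightarrow> nyldon w \<and> length w \<le> n"
proof (induction n)
  case 0
  then show ?case using nyl_upto_nonempty_le by (auto simp: nyldon_def)
next
  case (Suc n)
  then show ?case
    using nyl_upto_nonempty_le[of w n] by (cases "length w = Suc n") (auto simp: nyldon_def)
qed

lemma nyldon_nonempty: "nyldon w \<Longrightarrow> w \<noteq> []"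
  unfolding nyldon_def using nyl_upto_nonempty_le by blast

lemma is_nyldon_fact_iff:
  "is_nyldon_fact w fs \<longleftrightarrow> concat fs = w \<and> (\<forall>g\<in>set fs. nyldon g) \<and> successively lex_le fs"
  unfolding is_nyldon_fact_def using nyldon_nonempty by blast

lemma length_less_concat:
  assumes "2 \<le> length fs" "\<forall>g\<in>set fs. g \<noteq> []" "g \<in> set fs"
  shows "length g < length (concat fs)"
proof -
  obtain xs ys where fs: "fs = xs @ g # ys"
    using assms(3) by (meson split_list)
  then have "concat xs \<noteq> [] \<or> concat ys \<noteq> []"
    using assms(1,2) by auto
  then show ?thesis using fs by auto
qed

lemma nyldon_iff:
  "nyldon w \<longleftrightarrow> w \<noteq> [] \<and> (length w = 1 \<or> \<not> (\<exists>fs. 2 \<le> length fs \<and> is_nyldon_fact w fs))"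
proof (cases w)
  case Nil
  then show ?thesis using nyldon_nonempty by auto
next
  case (Cons x xs)
  then obtain n where n: "length w = Suc n" by auto
  have shorter: "(\<forall>g\<in>set fs. g \<noteq> [] \<and> g \<in> nyl_upto n) \<longleftrightarrow> (\<forall>g\<in>set fs. g \<noteq> [] \<and> nyldon g)"
    if "2 \<le> length fs" "concat fs = w" for fs
    using length_less_concat[OF that(1)] that(2) n by (auto simp: nyl_upto_iff less_Suc_eq_le)
  have "nyldon w \<longleftrightarrow> w \<in> nyl_upto (Suc n)"
    unfolding nyldon_def n ..
  also have "\<dots> \<longleftrightarrow> length w = 1 \<or> \<not> (\<exists>fs. 2 \<le> length fs \<and> concat fs = w \<and>
      (\<forall>g\<in>set fs. g \<noteq> [] \<and> g \<in> nyl_upto n) \<and> successively lex_le fs)"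
    using n nyl_upto_nonempty_le[of w n] by auto
  also have "\<dots> \<longleftrightarrow> length w = 1 \<or> \<not> (\<exists>fs. 2 \<le> length fs \<and> is_nyldon_fact w fs)"
    unfolding is_nyldon_fact_def using shorter by blast
  finally show ?thesis using Cons by simp
qed

lemma nyldon_singleton [simp]: "nyldon [x]"
  by (simp add: nyldon_iff)

lemma is_nyldon_fact_Nil_iff [simp]: "is_nyldon_fact [] fs \<longleftrightarrow> fs = []"
  unfolding is_nyldon_fact_def by auto

lemma is_nyldon_fact_singleton [simp]: "is_nyldon_fact w [w] \<longleftrightarrow> nyldon w"
  unfolding is_nyldon_fact_iff by simp

lemma is_nyldon_fact_nonempty: "is_nyldon_fact w fs \<Longrightarrow> w \<noteq> [] \<Longrightarrow> fs \<noteq> []"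
  unfolding is_nyldon_fact_def by auto

lemma is_nyldon_fact_append:
  "is_nyldon_fact u fs \<Longrightarrow> is_nyldon_fact v gs \<Longrightarrow> fs = [] \<or> gs = [] \<or> lex_le (last fs) (hd gs)
    \<Longrightarrow> is_nyldon_fact (u @ v) (fs @ gs)"
  unfolding is_nyldon_fact_def by (auto simp: successively_append_iff)

lemma is_nyldon_fact_snoc:
  "is_nyldon_fact w (fs @ [f]) \<longleftrightarrow>
     is_nyldon_fact (concat fs) fs \<and> nyldon f \<and> w = concat fs @ f \<and> (fs = [] \<or> lex_le (last fs) f)"
  unfolding is_nyldon_fact_iff by (auto simp: successively_append_iff)

lemma is_nyldon_fact_Cons:
  "is_nyldon_fact w (f # fs) \<longleftrightarrow>
     nyldon f \<and> is_nyldon_fact (concat fs) fs \<and> w = f @ concat fs \<and> (fs = [] \<or> lex_le f (hd fs))"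
  unfolding is_nyldon_fact_iff by (auto simp: successively_Cons)

lemma is_nyldon_fact_butlast_last:
  assumes "is_nyldon_fact w fs" "fs \<noteq> []"
  shows "is_nyldon_fact (concat (butlast fs)) (butlast fs)" "nyldon (last fs)"
    "w = concat (butlast fs) @ last fs" "butlast fs = [] \<or> lex_le (last (butlast fs)) (last fs)"
  using assms is_nyldon_fact_snoc[of w "butlast fs" "last fs"] by simp_all

lemma nyldon_fact_exists: "\<exists>fs. is_nyldon_fact w fs"
  using nyldon_iff[of w] is_nyldon_fact_singleton[of w] is_nyldon_fact_Nil_iff by blast

lemma is_nyldon_fact_of_nyldon:
  assumes w: "nyldon w" and fs: "is_nyldon_fact w fs"
  shows "fs = [w]"
proof -
  have "fs \<noteq> []" using is_nyldon_fact_nonempty[OF fs nyldon_nonempty[OF w]] .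
  moreover have "\<not> 2 \<le> length fs"
  proof
    assume two: "2 \<le> length fs"
    have "hd fs \<in> set fs" using \<open>fs \<noteq> []\<close> by simp
    then have "0 < length (hd fs)" "length (hd fs) < length w"
      using length_less_concat[OF two] fs unfolding is_nyldon_fact_def by auto
    then show False using w two fs unfolding nyldon_iff by auto
  qed
  ultimately obtain g where "fs = [g]" by (cases fs) (auto simp: Suc_le_eq)
  then show ?thesis using fs unfolding is_nyldon_fact_def by simp
qed

section \<open>Nyldon suffixes and uniqueness of the factorization\<close>

definition nyldon_suffixes_less :: "letter list \<Rightarrow> bool" where
  "nyldon_suffixes_less g \<longleftrightarrow> (\<forall>p h. g = p @ h \<longrightarrow> p \<noteq> [] \<longrightarrow> nyldon h \<longrightarrow> lex_less h g)"

lemma nyldon_suffixes_lessD: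
  "nyldon_suffixes_less g \<Longrightarrow> g = p @ h \<Longrightarrow> p \<noteq> [] \<Longrightarrow> nyldon h \<Longrightarrow> lex_less h g"
  unfolding nyldon_suffixes_less_def by blast

lemma last_factor_less_if_suffixes_less:
  assumes "nyldon_suffixes_less g" "g = p @ u" "p \<noteq> []" "is_nyldon_fact u hs" "hs \<noteq> []"
  shows "lex_less (last hs) g"
proof -
  note hs = is_nyldon_fact_butlast_last[OF assms(4,5)]
  have "g = (p @ concat (butlast hs)) @ last hs" using assms(2) hs(3) by simp
  then show ?thesis using nyldon_suffixes_lessD[OF assms(1) _ _ hs(2)] assms(3) by simp
qed

text \<open>The factors of \<open>u\<close> followed by \<open>rest\<close> form a nondecreasing Nyldon factorization of the
  Nyldon word \<open>s\<close>, which can only be \<open>[s]\<close>.\<close>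
lemma nyldon_suffix_across_first_factor:
  assumes "is_nyldon_fact w (g # rest)" "rest \<noteq> []" "nyldon_suffixes_less g"
    and "nyldon s" "g = p @ u" "s = u @ concat rest"
  shows "rest = [s]"
proof -
  have rest: "is_nyldon_fact (concat rest) rest" and "lex_le g (hd rest)"
    using assms(1,2) unfolding is_nyldon_fact_Cons by auto
  obtain hs where hs: "is_nyldon_fact u hs" "hs = [] \<or> lex_le (last hs) (hd rest)"
  proof (cases "p = []")
    case True
    then show ?thesis using that[of "[g]"] assms(1,5) \<open>lex_le g (hd rest)\<close>
      unfolding is_nyldon_fact_Cons by simp
  next
    case False
    obtain hs where hs: "is_nyldon_fact u hs" using nyldon_fact_exists by blast
    have "lex_less (last hs) g" if "hs \<noteq> []"
      using last_factor_less_if_suffixes_less[OF assms(3,5) False hs that] .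
    then have "hs = [] \<or> lex_le (last hs) (hd rest)"
      using \<open>lex_le g (hd rest)\<close> by (metis lex_less_le_trans lex_less_imp_le)
    then show ?thesis using that[OF hs] by simp
  qed
  then have "is_nyldon_fact s (hs @ rest)"
    using is_nyldon_fact_append[OF hs(1) rest] assms(6) by auto
  then have "hs @ rest = [s]" using is_nyldon_fact_of_nyldon assms(4) by blast
  then show ?thesis using assms(2) by (cases hs) auto
qed

lemma nyldon_suffix_of_last_factor_if_suffixes_less:
  assumes "is_nyldon_fact w gs" "gs \<noteq> []" "\<forall>g\<in>set gs. nyldon_suffixes_less g"
    and "nyldon s" "w = p @ s"
  shows "\<exists>q. last gs = q @ s"
  using assms
proof (induction gs arbitrary: w p)
  case Nil
  then show ?case by simp
next
  case (Cons g rest)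
  show ?case
  proof (cases "rest = []")
    case True
    then show ?thesis using Cons.prems(1,5) unfolding is_nyldon_fact_def by auto
  next
    case False
    have rest: "is_nyldon_fact (concat rest) rest" and w: "w = g @ concat rest"
      using Cons.prems(1) False unfolding is_nyldon_fact_Cons by auto
    from Cons.prems(5) w obtain u where
      "g @ u = p \<and> concat rest = u @ s \<or> g = p @ u \<and> u @ concat rest = s"
      by (auto simp: append_eq_append_conv2)
    then show ?thesis
    proof (elim disjE conjE)
      assume "concat rest = u @ s"
      then show ?thesis
        using Cons.IH[OF rest False _ Cons.prems(4)] Cons.prems(3) False by simp
    next
      assume g: "g = p @ u" and s: "u @ concat rest = s"
      have "nyldon_suffixes_less g" using Cons.prems(3) by simp
      then have "rest = [s]"
        by (rule nyldon_suffix_across_first_factor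
            [OF Cons.prems(1) False _ Cons.prems(4) g s[symmetric]])
      then show ?thesis by simp
    qed
  qed
qed

lemma nyldon_suffix_le_last_factor_if_suffixes_less:
  assumes "is_nyldon_fact w gs" "gs \<noteq> []" "\<forall>g\<in>set gs. nyldon_suffixes_less g"
    and "nyldon s" "w = p @ s"
  shows "lex_le s (last gs)"
proof -
  obtain q where q: "last gs = q @ s"
    using nyldon_suffix_of_last_factor_if_suffixes_less[OF assms] by blast
  have "nyldon_suffixes_less (last gs)" using assms(2,3) by simp
  then show ?thesis
    using q assms(4) unfolding nyldon_suffixes_less_def lex_le_def by (cases "q = []") auto
qed

lemma last_factor_Cons_le_if_suffixes_less:
  assumes "is_nyldon_fact v gs" "\<forall>g\<in>set gs. nyldon_suffixes_less g"
    and "is_nyldon_fact (x # v) fs" "butlast fs \<noteq> []"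
  shows "gs \<noteq> []" "lex_le (last fs) (last gs)"
proof -
  have "fs \<noteq> []" using assms(4) by auto
  note fs = is_nyldon_fact_butlast_last[OF assms(3) this]
  have "concat (butlast fs) \<noteq> []"
    using fs(1) assms(4) unfolding is_nyldon_fact_def by (cases "butlast fs") auto
  then obtain y r where "concat (butlast fs) = y # r" by (cases "concat (butlast fs)") auto
  then have v: "v = r @ last fs" using fs(3) by simp
  then show "gs \<noteq> []"
    using is_nyldon_fact_nonempty[OF assms(1)] nyldon_nonempty[OF fs(2)] by simp
  then show "lex_le (last fs) (last gs)"
    using nyldon_suffix_le_last_factor_if_suffixes_less[OF assms(1) _ assms(2) fs(2) v] by blast
qed

lemma factors_suffixes_less_if_shorter:
  assumes "\<And>f. length f < n \<Longrightarrow> nyldon f \<Longrightarrow> nyldon_suffixes_less f"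
    and "is_nyldon_fact s gs" "length s < n"
  shows "\<forall>f\<in>set gs. nyldon_suffixes_less f"
proof
  fix f assume f: "f \<in> set gs"
  then obtain us vs where "gs = us @ f # vs" by (meson split_list)
  then have "length f < n" using assms(2,3) unfolding is_nyldon_fact_def by auto
  moreover have "nyldon f" using assms(2) f unfolding is_nyldon_fact_def by blast
  ultimately show "nyldon_suffixes_less f" using assms(1) by blast
qed

text \<open>If \<open>g \<le> h\<close>, factor \<open>g = x s\<close> as \<open>x\<close>, the factors of \<open>s\<close> but the last one \<open>m\<close>, and \<open>m\<close>;
  then \<open>g < h \<le> m\<close>, and refactoring the prefix before \<open>m\<close> gives a nondecreasing
  factorization of \<open>g\<close> into at least two Nyldon words.\<close>
lemma nyldon_suffix_less_if_shorter_suffixes_less: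
  assumes shorter: "\<And>f. length f < length g \<Longrightarrow> nyldon f \<Longrightarrow> nyldon_suffixes_less f"
    and "nyldon g" "g = p @ h" "p \<noteq> []" and h: "nyldon h"
  shows "lex_less h g"
proof (rule ccontr)
  assume "\<not> lex_less h g"
  moreover have "h \<noteq> g" using assms(3,4) by auto
  ultimately have gh: "lex_less g h" using lex_less_linear by blast
  obtain x s where xs: "g = x # s" and s: "s = tl p @ h"
    using assms(3,4) by (cases p) auto
  obtain gs where gs: "is_nyldon_fact s gs" using nyldon_fact_exists by blast
  have "gs \<noteq> []" using is_nyldon_fact_nonempty[OF gs] s nyldon_nonempty[OF h] by simp
  have gs_less: "\<forall>f\<in>set gs. nyldon_suffixes_less f"
    using factors_suffixes_less_if_shorter[OF shorter gs] xs by simp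
  define m where "m = last gs"
  have "lex_le h m"
    using nyldon_suffix_le_last_factor_if_suffixes_less[OF gs \<open>gs \<noteq> []\<close> gs_less h s]
    unfolding m_def .
  with gh have gm: "lex_less g m" using lex_less_le_trans by blast
  note gs_split = is_nyldon_fact_butlast_last[OF gs \<open>gs \<noteq> []\<close>, folded m_def]
  obtain fs where fs: "is_nyldon_fact (x # concat (butlast gs)) fs"
    using nyldon_fact_exists by blast
  have "fs \<noteq> []" using is_nyldon_fact_nonempty[OF fs] by simp
  note fs_split = is_nyldon_fact_butlast_last[OF fs this]
  have cfs: "concat fs = x # concat (butlast gs)" using fs unfolding is_nyldon_fact_def by simp
  have g: "g = concat fs @ m" using xs gs_split(3) cfs by simp
  have "lex_le (last fs) m"
  proof (cases "butlast fs = []")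
    case True
    then have "concat fs = last fs" using fs_split(3) cfs by simp
    then have "lex_le (last fs) g" using g lex_le_self_append by simp
    then show ?thesis using gm lex_le_less_trans lex_less_imp_le by blast
  next
    case False
    have "\<forall>f\<in>set (butlast gs). nyldon_suffixes_less f"
      using gs_less by (simp add: in_set_butlastD)
    note last_fs = last_factor_Cons_le_if_suffixes_less[OF gs_split(1) this fs False]
    then show ?thesis using gs_split(4) lex_le_trans by blast
  qed
  then have "is_nyldon_fact g (fs @ [m])"
    using fs cfs gs_split(2) g unfolding is_nyldon_fact_snoc by simp
  then have "fs @ [m] = [g]" using is_nyldon_fact_of_nyldon assms(2) by blast
  then show False using \<open>fs \<noteq> []\<close> by (cases fs) auto
qed

lemma nyldon_suffixes_less: "nyldon g \<Longrightarrow> nyldon_suffixes_less g"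
proof (induction "length g" arbitrary: g rule: less_induct)
  case less
  show ?case unfolding nyldon_suffixes_less_def
  proof (intro allI impI)
    fix p h assume "g = p @ h" "p \<noteq> []" "nyldon h"
    then show "lex_less h g"
      using nyldon_suffix_less_if_shorter_suffixes_less[OF _ less.prems] less.hyps by metis
  qed
qed

lemma nyldon_suffix_of_last_factor:
  assumes "is_nyldon_fact w gs" "gs \<noteq> []" "nyldon s" "w = p @ s"
  shows "\<exists>q. last gs = q @ s"
proof -
  have "\<forall>g\<in>set gs. nyldon_suffixes_less g"
    using assms(1) nyldon_suffixes_less unfolding is_nyldon_fact_def by blast
  then show ?thesis
    by (rule nyldon_suffix_of_last_factor_if_suffixes_less[OF assms(1,2) _ assms(3,4)])
qed

lemma nyldon_fact_unique: "is_nyldon_fact w fs \<Longrightarrow> is_nyldon_fact w gs \<Longrightarrow> fs = gs"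
proof (induction fs arbitrary: w gs rule: rev_induct)
  case Nil
  then show ?case unfolding is_nyldon_fact_def by auto
next
  case (snoc f fs)
  have fs: "is_nyldon_fact (concat fs) fs" "nyldon f" "w = concat fs @ f"
    using snoc.prems(1) unfolding is_nyldon_fact_snoc by auto
  then have "gs \<noteq> []" using is_nyldon_fact_nonempty[OF snoc.prems(2)] nyldon_nonempty by simp
  note gs = is_nyldon_fact_butlast_last[OF snoc.prems(2) this]
  text \<open>Each of the two last factors is a suffix of the other.\<close>
  obtain q where "last gs = q @ f"
    using nyldon_suffix_of_last_factor[OF snoc.prems(2) \<open>gs \<noteq> []\<close> fs(2,3)] by blast
  moreover obtain q' where "f = q' @ last gs"
    using nyldon_suffix_of_last_factor[OF snoc.prems(1) _ gs(2,3)] by auto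
  ultimately have "last gs = f" by simp
  then have "fs = butlast gs" using snoc.IH[OF fs(1)] gs(1,3) fs(3) by simp
  then show ?case using \<open>last gs = f\<close> \<open>gs \<noteq> []\<close> by (metis append_butlast_last_id)
qed

section \<open>Standard factorization\<close>

lemma is_nyldon_fact_tl_Cons:
  assumes "is_nyldon_fact w (e # rest)" "rest \<noteq> []"
  obtains ks where "is_nyldon_fact (tl w) (ks @ rest)"
proof -
  have e: "nyldon e" "is_nyldon_fact (concat rest) rest" "w = e @ concat rest" "lex_le e (hd rest)"
    using assms unfolding is_nyldon_fact_Cons by auto
  obtain ks where ks: "is_nyldon_fact (tl e) ks" using nyldon_fact_exists by blast
  have "e = [hd e] @ tl e" using nyldon_nonempty[OF e(1)] by simp
  then have "lex_less (last ks) e" if "ks \<noteq> []"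
    using last_factor_less_if_suffixes_less[OF nyldon_suffixes_less[OF e(1)] _ _ ks that]
    by blast
  then have "ks = [] \<or> lex_le (last ks) (hd rest)"
    using e(4) by (metis lex_less_le_trans lex_less_imp_le)
  then have "is_nyldon_fact (tl e @ concat rest) (ks @ rest)"
    using is_nyldon_fact_append[OF ks e(2)] by blast
  then show ?thesis using that e(3) nyldon_nonempty[OF e(1)] by simp
qed

text \<open>\<open>std_suffix u v\<close>: \<open>v\<close> is the right factor of the standard factorization of
  \<open>u\<close>, i.e.\ its longest proper Nyldon suffix (cf.\ \<open>nyldon_suffix_of_last_factor\<close>).\<close>
definition std_suffix :: "letter list \<Rightarrow> letter list \<Rightarrow> bool" where
  "std_suffix u v \<longleftrightarrow> (\<exists>hs. is_nyldon_fact (tl u) hs \<and> hs \<noteq> [] \<and> last hs = v)"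

lemma nyldon_append:
  assumes u: "nyldon u" and v: "nyldon v" and "lex_less v u"
    and std: "tl u = [] \<or> (\<exists>h. std_suffix u h \<and> lex_le h v)"
  shows "nyldon (u @ v) \<and> std_suffix (u @ v) v"
proof -
  obtain hs where hs: "is_nyldon_fact (tl u) hs" "hs = [] \<or> lex_le (last hs) v"
  proof (cases "tl u = []")
    case True
    then show ?thesis using that[of "[]"] by simp
  next
    case False
    then show ?thesis using std that unfolding std_suffix_def by blast
  qed
  have "is_nyldon_fact (tl u @ v) (hs @ [v])"
    using is_nyldon_fact_append[OF hs(1), of v "[v]"] hs(2) v by simp
  then have tl_uv: "is_nyldon_fact (tl (u @ v)) (hs @ [v])"
    using nyldon_nonempty[OF u] by simp
  have "\<not> is_nyldon_fact (u @ v) fs" if "2 \<le> length fs" for fs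
  proof
    assume fs: "is_nyldon_fact (u @ v) fs"
    obtain e rest where fs_eq: "fs = e # rest" and "rest \<noteq> []"
      using \<open>2 \<le> length fs\<close> by (cases fs) (auto simp: Suc_le_eq)
    then obtain ks where "is_nyldon_fact (tl (u @ v)) (ks @ rest)"
      using is_nyldon_fact_tl_Cons fs by blast
    text \<open>By uniqueness the last factor of \<open>fs\<close> is \<open>v\<close>, so \<open>fs = [u, v]\<close>.\<close>
    then have "ks @ rest = hs @ [v]" using nyldon_fact_unique tl_uv by blast
    then have "last rest = v" using \<open>rest \<noteq> []\<close> by (metis last_appendR last_snoc)
    then have last_fs: "last fs = v" using fs_eq \<open>rest \<noteq> []\<close> by simp
    have "fs \<noteq> []" "butlast fs \<noteq> []" using fs_eq \<open>rest \<noteq> []\<close> by simp_all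
    note fs_split = is_nyldon_fact_butlast_last[OF fs \<open>fs \<noteq> []\<close>, unfolded last_fs]
    have "butlast fs = [u]"
      using is_nyldon_fact_of_nyldon[OF u] fs_split(1,3) by simp
    then have "lex_le u v" using fs_split(4) by simp
    then show False using \<open>lex_less v u\<close> not_lex_le_if_less by blast
  qed
  then have "nyldon (u @ v)" using nyldon_iff nyldon_nonempty[OF u] by auto
  moreover have "std_suffix (u @ v) v"
    unfolding std_suffix_def using tl_uv by (intro exI[of _ "hs @ [v]"]) simp
  ultimately show ?thesis ..
qed

lemma nyldon_append_std:
  assumes "nyldon u \<and> std_suffix u h" "lex_le h v" "nyldon v" "lex_less v u" "w = u @ v"
  shows "nyldon w \<and> std_suffix w v"
  using nyldon_append[of u v] assms by auto

section \<open>Thue--Morse words\<close>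

lemma flip_flip [simp]: "flip (flip x) = x"
  by (cases x) auto

lemma compl_Nil [simp]: "compl [] = []"
  and compl_Cons [simp]: "compl (x # xs) = flip x # compl xs"
  and compl_append [simp]: "compl (xs @ ys) = compl xs @ compl ys"
  and compl_compl [simp]: "compl (compl xs) = xs"
  unfolding compl_def by (simp_all add: comp_def)

definition T :: "nat \<Rightarrow> letter list" where
  "T i = TM (2 * i)"

definition C :: "nat \<Rightarrow> letter list" where
  "C i = compl (T i)"

definition C' :: "nat \<Rightarrow> letter list" where
  "C' i = butlast (C i)"

lemma T_0: "T 0 = [a]"
  unfolding T_def by simp

lemma C_0: "C 0 = [b]"
  unfolding C_def T_def by simp

lemma T_Suc: "T (Suc i) = T i @ C i @ C i @ T i"
  unfolding T_def C_def by simp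

lemma C_Suc: "C (Suc i) = C i @ T i @ T i @ C i"
  unfolding T_def C_def by simp

lemma T_Cons: "\<exists>r. T i = a # r"
  by (induction i) (auto simp: T_0 T_Suc)

lemma C_Cons: "\<exists>q. C i = b # q"
  by (induction i) (auto simp: C_0 C_Suc)

lemma C_snoc: "C i = C' i @ [b]"
proof -
  have "C i \<noteq> [] \<and> last (C i) = b"
    by (induction i) (auto simp: C_0 C_Suc)
  then show ?thesis unfolding C'_def by (metis append_butlast_last_id)
qed

lemma C'_Suc: "C' (Suc i) = C i @ T i @ T i @ C' i"
  unfolding C'_def C_Suc using C_Cons[of i] by (auto simp: butlast_append)

lemma C'_Cons: "1 \<le> i \<Longrightarrow> \<exists>q. C' i = b # q"
  using C_Cons[of "i - 1"] C'_Suc[of "i - 1"] by (cases i) auto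

lemma T_Suc_Cons: "\<exists>r. T (Suc i) = a # b # r"
  by (induction i) (auto simp: T_Suc[of 0] T_Suc[of "Suc i" for i] T_0 C_0)

lemma T_Suc_0: "T (Suc 0) = [a, b, b, a]"
  using T_Suc[of 0] by (simp add: T_0 C_0)

lemma C_Suc_0: "C (Suc 0) = [b, a, a, b]"
  using C_Suc[of 0] by (simp add: T_0 C_0)

lemma C'_Suc_0: "C' (Suc 0) = [b, a, a]"
  unfolding C'_def C_Suc_0 by simp

section \<open>The Nyldon factors of Thue--Morse words\<close>

text \<open>Words over \<open>t = T i\<close>, \<open>c = C i\<close> and \<open>c' = C' i\<close> (where \<open>c = c' b\<close>) whose
  Nyldon property is proved simultaneously by induction on \<open>i\<close>.\<close>
definition Q :: "nat \<Rightarrow> letter list" where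
  "Q i = b # T i"
definition V :: "nat \<Rightarrow> letter list" where
  "V i = b # T i @ C' i"
definition U :: "nat \<Rightarrow> letter list" where
  "U i = b # T i @ C i @ C' i"
definition W :: "nat \<Rightarrow> letter list" where
  "W i = b # T i @ T i @ C i"
definition R :: "nat \<Rightarrow> letter list" where
  "R i = b # T i @ T i @ C' i"
definition Z :: "nat \<Rightarrow> letter list" where
  "Z i = b # T i @ T i @ C i @ C' i"
definition L :: "nat \<Rightarrow> letter list" where
  "L i = b # T i @ C i @ T i @ T i @ C i"
definition S :: "nat \<Rightarrow> letter list" where
  "S i = b # T i @ C i @ T i @ T i @ C' i"
definition Y :: "nat \<Rightarrow> letter list" where
  "Y i = b # T i @ T i @ C i @ C i @ T i @ T i @ C' i"
definition P :: "nat \<Rightarrow> letter list" where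
  "P i = b # T i @ C i @ T i @ T i @ C i @ C i @ T i @ T i @ C' i"
definition X :: "nat \<Rightarrow> letter list" where
  "X i = U i @ Z i"

lemmas family_defs = Q_def V_def U_def W_def R_def Z_def L_def S_def Y_def P_def X_def

lemma family_Suc:
  "Q (Suc i) = U i @ Q i"
  "U (Suc i) = U i @ P i"
  "V (Suc i) = U i @ S i"
  "W (Suc i) = X i @ L i"
  "R (Suc i) = X i @ S i"
  "Z (Suc i) = X i @ P i"
  unfolding family_defs by (simp_all add: T_Suc C_Suc C'_Suc C_snoc)

lemma family_split:
  "L i = V i @ W i"
  "S i = V i @ R i"
  "Y i = Z i @ R i"
  "P i = V i @ Y i"
  unfolding family_defs by (simp_all add: C_snoc)

lemma family_lex_less:
  assumes "1 \<le> i"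
  shows "lex_less (W i) (V i)" "lex_less (R i) (V i)" "lex_less (R i) (Z i)"
    "lex_less (Y i) (V i)" "lex_less (Z i) (U i)" "lex_less (L i) (X i)"
    "lex_less (S i) (X i)" "lex_less (P i) (X i)" "lex_less (Z i) (L i)"
    "lex_less (Z i) (S i)" "lex_less (Z i) (P i)" "lex_less (P i) (U i)"
    "lex_less (Q i) (U i)" "lex_less (S i) (U i)"
proof -
  obtain r where "T i = a # r" using T_Cons by blast
  moreover obtain q where "C' i = b # q" using C'_Cons[OF assms] by blast
  moreover have "C i = b # q @ [b]" using C_snoc[of i] \<open>C' i = b # q\<close> by simp
  ultimately show
    "lex_less (W i) (V i)" "lex_less (R i) (V i)" "lex_less (R i) (Z i)"
    "lex_less (Y i) (V i)" "lex_less (Z i) (U i)" "lex_less (L i) (X i)"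
    "lex_less (S i) (X i)" "lex_less (P i) (X i)" "lex_less (Z i) (L i)"
    "lex_less (Z i) (S i)" "lex_less (Z i) (P i)" "lex_less (P i) (U i)"
    "lex_less (Q i) (U i)" "lex_less (S i) (U i)"
    unfolding family_defs by simp_all
qed

text \<open>\<open>F j\<close> is the \<open>j\<close>-th Nyldon factor of the Thue--Morse words after the prefix
  \<open>a, b, ba\<close> (\<open>F 0\<close> is a dummy value); only \<open>F 1 = baab baa\<close> does not have the generic
  shape \<open>P\<close>.\<close>
fun F :: "nat \<Rightarrow> letter list" where
  "F 0 = []"
| "F (Suc 0) = [b, a, a, b, b, a, a]"
| "F (Suc (Suc i)) = P (Suc i)"

lemma F_Suc: "1 \<le> i \<Longrightarrow> F (Suc i) = P i"
  by (cases i) auto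

lemma F_less: "1 \<le> i \<Longrightarrow> lex_less (F i) (b # T i @ y)"
proof (cases "i = 1")
  case True
  then show ?thesis by (simp add: T_Suc T_0 C_0)
next
  case False
  moreover assume "1 \<le> i"
  ultimately obtain m where m: "i = Suc m" "1 \<le> m" by (cases i) auto
  obtain r q where "T m = a # r" "C m = b # q" using T_Cons C_Cons by blast
  then show ?thesis using m by (simp add: F_Suc P_def T_Suc)
qed

lemma S_less: "lex_less (S i) (b # T (Suc i) @ y)"
  using T_Cons[of i] C_Cons[of i] by (auto simp: S_def T_Suc)

lemma baa_less: "lex_less [b, a, a] (b # T (Suc i) @ y)"
  using T_Suc_Cons[of i] by auto

lemma L_S_P_nyldon:
  assumes "1 \<le> i" "nyldon (V i) \<and> std_suffix (V i) h"
    "lex_le h (W i)" "lex_le h (R i)" "lex_le h (Y i)" "nyldon (W i)" "nyldon (R i)"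
    "nyldon (Z i) \<and> std_suffix (Z i) (F i)" "lex_le (F i) (R i)"
  shows "nyldon (L i) \<and> nyldon (S i) \<and> nyldon (P i)"
proof -
  note less = family_lex_less[OF assms(1)]
  have "nyldon (L i)"
    using nyldon_append_std[OF assms(2,3,6) less(1) family_split(1)] by simp
  moreover have "nyldon (S i)"
    using nyldon_append_std[OF assms(2,4,7) less(2) family_split(2)] by simp
  moreover have "nyldon (Y i)"
    using nyldon_append_std[OF assms(8,9,7) less(3) family_split(3)] by simp
  then have "nyldon (P i)"
    using nyldon_append_std[OF assms(2,5) _ less(4) family_split(4)] by simp
  ultimately show ?thesis by blast
qed

definition families_nyldon :: "nat \<Rightarrow> bool" where
  "families_nyldon i \<longleftrightarrow>
     nyldon (U i) \<and> std_suffix (U i) (F i) \<and> nyldon (Q i) \<and> nyldon (Z i) \<and> std_suffix (Z i) (F i)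
     \<and> nyldon (L i) \<and> nyldon (S i) \<and> nyldon (P i) \<and> nyldon (F i)"

lemma families_nyldon_Suc:
  assumes i: "1 \<le> i" and fam: "families_nyldon i"
  shows "families_nyldon (Suc i)"
proof -
  note less = family_lex_less[OF i]
  have U: "nyldon (U i) \<and> std_suffix (U i) (F i)" and Q: "nyldon (Q i)"
    and Z: "nyldon (Z i) \<and> std_suffix (Z i) (F i)"
    and L: "nyldon (L i)" and S: "nyldon (S i)" and P: "nyldon (P i)"
    using fam unfolding families_nyldon_def by auto
  have F_le: "lex_le (F i) (Z i)" "lex_le (F i) (P i)" "lex_le (F i) (Q i)" "lex_le (F i) (S i)"
    using F_less[OF i] F_less[OF i, of "[]"] lex_less_imp_le unfolding family_defs by simp_all
  have X: "nyldon (X i) \<and> std_suffix (X i) (Z i)"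
    using nyldon_append_std[OF U F_le(1) conjunct1[OF Z] less(5) X_def] .
  note append_X = nyldon_append_std[OF X lex_less_imp_le]
  have W': "nyldon (W (Suc i))"
    using append_X[OF less(9) L less(6) family_Suc(4)] by simp
  have R': "nyldon (R (Suc i))"
    using append_X[OF less(10) S less(7) family_Suc(5)] by simp
  have Z': "nyldon (Z (Suc i)) \<and> std_suffix (Z (Suc i)) (P i)"
    using append_X[OF less(11) P less(8) family_Suc(6)] .
  have U': "nyldon (U (Suc i)) \<and> std_suffix (U (Suc i)) (P i)"
    using nyldon_append_std[OF U F_le(2) P less(12) family_Suc(2)] .
  have Q': "nyldon (Q (Suc i))"
    using nyldon_append_std[OF U F_le(3) Q less(13) family_Suc(1)] by simp
  have V': "nyldon (V (Suc i)) \<and> std_suffix (V (Suc i)) (S i)"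
    using nyldon_append_std[OF U F_le(4) S less(14) family_Suc(3)] .
  have S_le: "lex_le (S i) (b # T (Suc i) @ y)" for y
    using S_less lex_less_imp_le by blast
  have "nyldon (L (Suc i)) \<and> nyldon (S (Suc i)) \<and> nyldon (P (Suc i))"
  proof (rule L_S_P_nyldon[OF _ V'])
    show "lex_le (F (Suc i)) (R (Suc i))"
      using F_less lex_less_imp_le unfolding R_def by simp
  qed (use W' R' Z' S_le F_Suc[OF i] in \<open>simp_all add: W_def R_def Y_def\<close>)
  then show ?thesis
    unfolding families_nyldon_def using U' Q' Z' P F_Suc[OF i] by simp
qed

lemma nyldon_ba: "nyldon [b, a] \<and> std_suffix [b, a] [a]"
  using nyldon_append[of "[b]" "[a]"] by simp

lemma nyldon_baa: "nyldon [b, a, a] \<and> std_suffix [b, a, a] [a]"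
  by (rule nyldon_append_std[OF nyldon_ba]) (simp_all add: lex_le_def)

lemma nyldon_baab: "nyldon [b, a, a, b] \<and> std_suffix [b, a, a, b] [b]"
  by (rule nyldon_append_std[OF nyldon_baa]) (simp_all add: lex_le_def)

lemma families_nyldon_1: "families_nyldon 1"
proof -
  note app = nyldon_append_std and ba = nyldon_ba and baa = nyldon_baa and baab = nyldon_baab
  have bab: "nyldon [b, a, b] \<and> std_suffix [b, a, b] [b]"
    by (rule app[OF ba]) (simp_all add: lex_le_def)
  have baabba: "nyldon [b, a, a, b, b, a] \<and> std_suffix [b, a, a, b, b, a] [b, a]"
    by (rule app[OF baab _ ba[THEN conjunct1]]) (simp_all add: lex_le_def)
  have F1: "nyldon (F 1) \<and> std_suffix (F 1) [b, a, a]"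
    by (rule app[OF baab _ baa[THEN conjunct1]]) (simp_all add: lex_le_def)
  have Q1: "nyldon (Q 1) \<and> std_suffix (Q 1) [b, a]"
    by (rule app[OF bab _ ba[THEN conjunct1]]) (simp_all add: lex_le_def Q_def T_Suc_0)
  have U1: "nyldon (U 1) \<and> std_suffix (U 1) (F 1)"
    by (rule app[OF Q1 _ F1[THEN conjunct1]])
      (simp_all add: lex_le_def family_defs T_Suc_0 C_Suc_0 C'_Suc_0)
  have V1: "nyldon (V 1) \<and> std_suffix (V 1) [b, a, a]"
    by (rule app[OF Q1 _ baa[THEN conjunct1]])
      (simp_all add: lex_le_def family_defs T_Suc_0 C'_Suc_0)
  have "nyldon [b, a, a, b, b, a, b, a, a, b]"
    using app[OF baabba _ baab[THEN conjunct1]] by (simp add: lex_le_def)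
  then have W1: "nyldon (W 1)"
    using app[OF bab] by (simp add: lex_le_def W_def T_Suc_0 C_Suc_0)
  have "nyldon [b, a, a, b, b, a, b, a, a]"
    using app[OF baabba _ baa[THEN conjunct1]] by (simp add: lex_le_def)
  then have R1: "nyldon (R 1)"
    using app[OF bab] by (simp add: lex_le_def R_def T_Suc_0 C'_Suc_0)
  have "nyldon [b, a, b, b, a, a, b, b, a] \<and>
      std_suffix [b, a, b, b, a, a, b, b, a] [b, a, a, b, b, a]"
    by (rule app[OF bab _ baabba[THEN conjunct1]]) (simp_all add: lex_le_def)
  then have Z1: "nyldon (Z 1) \<and> std_suffix (Z 1) (F 1)"
    by (rule app[OF _ _ F1[THEN conjunct1]])
      (simp_all add: lex_le_def Z_def T_Suc_0 C_Suc_0 C'_Suc_0)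
  have "nyldon (L 1) \<and> nyldon (S 1) \<and> nyldon (P 1)"
  proof (rule L_S_P_nyldon[OF _ V1 _ _ _ W1 R1])
    show "lex_le (F 1) (R 1)"
      using F_less[of 1] lex_less_imp_le unfolding R_def by simp
  qed (use Z1 baa_less[of 0] lex_less_imp_le in \<open>simp_all add: W_def R_def Y_def\<close>)
  then show ?thesis
    unfolding families_nyldon_def using U1 Q1 Z1 F1 by simp
qed

lemma families_nyldon: "1 \<le> i \<Longrightarrow> families_nyldon i"
proof (induction i rule: dec_induct)
  case base
  then show ?case by (rule families_nyldon_1)
next
  case (step i)
  then show ?case using families_nyldon_Suc by blast
qed

definition tm_factors :: "nat \<Rightarrow> letter list list" where
  "tm_factors n = [[a], [b], [b, a]] @ map F [1..<n]"

lemma tm_factors_Suc: "1 \<le> n \<Longrightarrow> tm_factors (Suc n) = tm_factors n @ [F n]"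
  unfolding tm_factors_def by simp

lemma is_nyldon_fact_tm_factors:
  "1 \<le> n \<Longrightarrow> is_nyldon_fact (concat (tm_factors (Suc n))) (tm_factors (Suc n))"
proof (induction n rule: dec_induct)
  case base
  have "nyldon [b, a]" using nyldon_ba by simp
  moreover have "nyldon (F 1)" using families_nyldon[of 1] unfolding families_nyldon_def by simp
  ultimately show ?case unfolding tm_factors_def is_nyldon_fact_iff by (simp add: lex_le_def)
next
  case (step m)
  have "lex_le (F m) (F (Suc m))"
    using F_less[OF step.hyps(1)] F_Suc[OF step.hyps(1)] lex_less_imp_le unfolding P_def by simp
  moreover have "nyldon (F (Suc m))"
    using families_nyldon[of "Suc m"] unfolding families_nyldon_def by simp
  moreover have "last (tm_factors (Suc m)) = F m"
    using tm_factors_Suc[OF step.hyps(1)] by simp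
  moreover have "tm_factors (Suc (Suc m)) = tm_factors (Suc m) @ [F (Suc m)]"
    by (rule tm_factors_Suc) simp
  ultimately show ?case
    using step.IH by (simp add: is_nyldon_fact_snoc)
qed

lemma concat_tm_factors: "1 \<le> n \<Longrightarrow> concat (tm_factors (Suc n)) = T n @ C n @ C' n"
proof (induction n rule: dec_induct)
  case base
  then show ?case by (simp add: tm_factors_def T_Suc_0 C_Suc_0 C'_Suc_0)
next
  case (step m)
  then show ?case
    using tm_factors_Suc[of "Suc m"] F_Suc[OF step.hyps(1)]
    by (simp add: P_def T_Suc C_Suc C'_Suc C_snoc)
qed

lemma TM_even_Suc: "TM (2 * Suc i) = T i @ C i @ C' i @ Q i"
proof -
  have "TM (2 * Suc i) = T (Suc i)" unfolding T_def ..
  then show ?thesis by (simp add: T_Suc C_snoc Q_def)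
qed

lemma TM_odd_Suc: "TM (Suc (2 * Suc i)) = T i @ C i @ C' i @ L i"
proof -
  have "TM (Suc (2 * Suc i)) = T (Suc i) @ C (Suc i)" unfolding T_def C_def by simp
  then show ?thesis by (simp add: T_Suc C_Suc C_snoc[of i] L_def)
qed

lemma is_nyldon_fact_tm_factors_snoc:
  assumes "1 \<le> i" "nyldon w" "lex_le (F i) w"
  shows "is_nyldon_fact (T i @ C i @ C' i @ w) (tm_factors (Suc i) @ [w])"
proof -
  have "last (tm_factors (Suc i)) = F i" using tm_factors_Suc[OF assms(1)] by simp
  then have "is_nyldon_fact (concat (tm_factors (Suc i)) @ w) (tm_factors (Suc i) @ [w])"
    using is_nyldon_fact_tm_factors[OF assms(1)] assms(2,3) unfolding is_nyldon_fact_snoc by simp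
  then show ?thesis using concat_tm_factors[OF assms(1)] by simp
qed

lemma is_nyldon_fact_TM_even:
  assumes "1 \<le> i"
  shows "is_nyldon_fact (TM (2 * Suc i)) (tm_factors (Suc i) @ [Q i])"
  unfolding TM_even_Suc
proof (rule is_nyldon_fact_tm_factors_snoc[OF assms])
  show "nyldon (Q i)" using families_nyldon[OF assms] unfolding families_nyldon_def by simp
  show "lex_le (F i) (Q i)" using F_less[OF assms, of "[]"] lex_less_imp_le unfolding Q_def by simp
qed

lemma is_nyldon_fact_TM_odd:
  assumes "1 \<le> i"
  shows "is_nyldon_fact (TM (Suc (2 * Suc i))) (tm_factors (Suc i) @ [L i])"
  unfolding TM_odd_Suc
proof (rule is_nyldon_fact_tm_factors_snoc[OF assms])
  show "nyldon (L i)" using families_nyldon[OF assms] unfolding families_nyldon_def by simp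
  show "lex_le (F i) (L i)" using F_less[OF assms] lex_less_imp_le unfolding L_def by simp
qed

lemma is_nyldon_fact_TM_odd_last:
  assumes "1 \<le> m"
  obtains x where "is_nyldon_fact (TM (Suc (2 * m))) (tm_factors m @ [x])" "x @ C' m = F m"
proof (cases "m = 1")
  case True
  have "is_nyldon_fact (TM (Suc (2 * m))) (tm_factors m @ [[b, a, a, b]])"
    using nyldon_ba nyldon_baab True
    by (simp add: tm_factors_def is_nyldon_fact_iff numeral_eq_Suc lex_le_def)
  then show ?thesis using that True C'_Suc_0 by simp
next
  case False
  with assms obtain i where i: "m = Suc i" "1 \<le> i" by (cases m) auto
  have "L i @ C' m = F m"
    using i F_Suc[OF i(2)] by (simp add: L_def P_def C'_Suc C_snoc)
  then show ?thesis using that is_nyldon_fact_TM_odd[OF i(2)] i(1) by simp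
qed

theorem theorem4:
  fixes k :: nat and xs :: "letter list list"
  assumes "k \<ge> 2"
    and "is_nyldon_fact (TM (2*k - 1)) xs"
  shows "is_nyldon_fact (TM (2*k))
           (butlast xs @ [last xs @ butlast (compl (TM (2*k - 2))), b # TM (2*k - 2)])
       \<and> is_nyldon_fact (TM (2*k + 1))
           (butlast xs @ [last xs @ butlast (compl (TM (2*k - 2))),
                          b # TM (2*k - 2) @ compl (TM (2*k))])"
proof -
  obtain m where k: "k = Suc m" and m: "1 \<le> m" using assms(1) by (cases k) auto
  then have idx: "2 * k - 1 = Suc (2 * m)" "2 * k - 2 = 2 * m" "2 * k + 1 = Suc (2 * Suc m)"
    by simp_all
  obtain x where x: "is_nyldon_fact (TM (Suc (2 * m))) (tm_factors m @ [x])" "x @ C' m = F m"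
    using is_nyldon_fact_TM_odd_last[OF m] by blast
  have "xs = tm_factors m @ [x]"
    using nyldon_fact_unique assms(2) x(1) unfolding idx by blast
  moreover have "butlast (compl (TM (2 * m))) = C' m" "b # TM (2 * m) = Q m"
    "b # TM (2 * m) @ compl (TM (2 * Suc m)) = L m"
    unfolding C'_def C_def T_def Q_def L_def by simp_all
  ultimately show ?thesis
    using is_nyldon_fact_TM_even[OF m] is_nyldon_fact_TM_odd[OF m] x(2) tm_factors_Suc[OF m]
    unfolding k idx by simp
qed

end
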